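(* Let $n\geq 4$, $1\leq d\leq n-1$, and $G\in\Omega_{n,d}$. Suppose $\{v_0,v_1,v_2\}\subseteq[n]$ is a set of three vertices such that the induced subdigraph $G[\{v_0,v_1,v_2\}]$ is a directed 3-cycle. Then there exists a useful neighbour or a useful arc for this 3-cycle.
   Context: $\Omega_{n,d}$ is the set of simple digraphs on $[n]$ in which every vertex has in-degree and out-degree $d$. For $U=\{v_0,v_1,v_2\}$ define the subsets of $V(G)\setminus U$: $\mathcal{W}^{(0,0)}=\{x: (x,u)\notin A(G),(u,x)\notin A(G)\ \forall u\in U\}$, $\mathcal{W}^{(0,1)}=\{x:(x,u)\notin A(G),(u,x)\in A(G)\ \forall u\in U\}$, $\mathcal{W}^{(1,0)}=\{x:(x,u)\in A(G),(u,x)\notin A(G)\ \forall u\in U\}$, $\mathcal{W}^{(1,1)}=\{x:(x,u)\in A(G),(u,x)\in A(G)\ \forall u\in U\}$. A vertex $x\in V(G)\setminus U$ is a useful neighbour for the 3-cycle if $x$ lies in none of the four sets $\mathcal{W}^{(i,j)}$. An ordered pair $(x,y)$ with $x\neq y$ is a useful arc for the 3-cycle if either (U1) $(x,y)\in A(G)$, $x\in\mathcal{W}^{(0,0)}\cup\mathcal{W}^{(0,1)}$ and $y\in\mathcal{W}^{(0,0)}\cup\mathcal{W}^{(1,0)}$; or (U2) $(x,y)\notin A(G)$, $x\in\mathcal{W}^{(1,0)}\cup\mathcal{W}^{(1,1)}$ and $y\in\mathcal{W}^{(0,1)}\cup\mathcal{W}^{(1,1)}$. *)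

theory Defs
  imports Main
begin

text \<open>A digraph on [n] = {1..n} is given by its arc set A :: (nat \<times> nat) set.
  Simple: no loops (multiple arcs impossible in a set). Opposite arcs allowed.\<close>

definition Omega :: "nat \<Rightarrow> nat \<Rightarrow> (nat \<times> nat) set set" where
  "Omega n d = {A. A \<subseteq> {1..n} \<times> {1..n} \<and> (\<forall>v. (v, v) \<notin> A) \<and>
     (\<forall>v\<in>{1..n}. card {u. (v, u) \<in> A} = d \<and> card {u. (u, v) \<in> A} = d)}"

definition W00 :: "nat \<Rightarrow> (nat \<times> nat) set \<Rightarrow> nat set \<Rightarrow> nat set" where
  "W00 n A U = {x \<in> {1..n} - U. \<forall>u\<in>U. (x, u) \<notin> A \<and> (u, x) \<notin> A}"

definition W01 :: "nat \<Rightarrow> (nat \<times> nat) set \<Rightarrow> nat set \<Rightarrow> nat set" where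
  "W01 n A U = {x \<in> {1..n} - U. \<forall>u\<in>U. (x, u) \<notin> A \<and> (u, x) \<in> A}"

definition W10 :: "nat \<Rightarrow> (nat \<times> nat) set \<Rightarrow> nat set \<Rightarrow> nat set" where
  "W10 n A U = {x \<in> {1..n} - U. \<forall>u\<in>U. (x, u) \<in> A \<and> (u, x) \<notin> A}"

definition W11 :: "nat \<Rightarrow> (nat \<times> nat) set \<Rightarrow> nat set \<Rightarrow> nat set" where
  "W11 n A U = {x \<in> {1..n} - U. \<forall>u\<in>U. (x, u) \<in> A \<and> (u, x) \<in> A}"

definition useful_neighbour :: "nat \<Rightarrow> (nat \<times> nat) set \<Rightarrow> nat set \<Rightarrow> nat \<Rightarrow> bool" where
  "useful_neighbour n A U x \<longleftrightarrow> x \<in> {1..n} - U \<and>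
     x \<notin> W00 n A U \<and> x \<notin> W01 n A U \<and> x \<notin> W10 n A U \<and> x \<notin> W11 n A U"

definition useful_arc :: "nat \<Rightarrow> (nat \<times> nat) set \<Rightarrow> nat set \<Rightarrow> nat \<Rightarrow> nat \<Rightarrow> bool" where
  "useful_arc n A U x y \<longleftrightarrow> x \<noteq> y \<and>
     (((x, y) \<in> A \<and> x \<in> W00 n A U \<union> W01 n A U \<and> y \<in> W00 n A U \<union> W10 n A U) \<or>
      ((x, y) \<notin> A \<and> x \<in> W10 n A U \<union> W11 n A U \<and> y \<in> W01 n A U \<union> W11 n A U))"

end

theory Submission
  imports Defs
begin

(* Suppose the 3-cycle U = {v0,v1,v2} has neither a useful neighbour
   nor a useful arc.  Then every vertex outside U lies in one of the four classes W(i,j),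
   so the out-neighbours of v0 outside U are exactly P = W01 \<union> W11 and its in-neighbours
   outside U are exactly Q = W10 \<union> W11.  Inside U the vertex v0 has exactly one out- and one
   in-neighbour, whence d = 1 + |P| = 1 + |Q|.  A vertex y \<in> P receives arcs from all of U and,
   since no pair (u,y) with u \<in> Q is a useful arc of type (U2), from all of Q - {y}; its
   in-degree would be at least 3 + (d - 2) > d.  Hence P = {}, so d = 1 and Q = {}: every
   outside vertex lies in W00.  As n \<ge> 4 such a vertex x exists, and its unique out-neighbour
   z again lies in W00, so (x,z) is a useful arc of type (U1), a contradiction. *)

lemma Omega_D:
  assumes "A \<in> Omega n d"
  shows "A \<subseteq> {1..n} \<times> {1..n}" and "(v, v) \<notin> A"
    and "v \<in> {1..n} \<Longrightarrow> card {u. (v, u) \<in> A} = d"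
    and "v \<in> {1..n} \<Longrightarrow> card {u. (u, v) \<in> A} = d"
  using assms unfolding Omega_def by auto

lemma W_outside:
  "W00 n A U \<subseteq> {1..n} - U" "W01 n A U \<subseteq> {1..n} - U"
  "W10 n A U \<subseteq> {1..n} - U" "W11 n A U \<subseteq> {1..n} - U"
  unfolding W00_def W01_def W10_def W11_def by auto

lemma classified_if_not_useful:
  assumes "\<not> useful_neighbour n A U x" and "x \<in> {1..n} - U"
  shows "x \<in> W00 n A U \<union> W01 n A U \<union> W10 n A U \<union> W11 n A U"
  using assms unfolding useful_neighbour_def by blast

lemma out_neighbours_split:
  assumes arcs: "A \<subseteq> {1..n} \<times> {1..n}" and none: "\<forall>x. \<not> useful_neighbour n A U x"
    and v: "v \<in> U"
  shows "{u. (v, u) \<in> A} = {u \<in> U. (v, u) \<in> A} \<union> (W01 n A U \<union> W11 n A U)"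
proof (intro equalityI subsetI)
  fix u assume u: "u \<in> {u. (v, u) \<in> A}"
  show "u \<in> {u \<in> U. (v, u) \<in> A} \<union> (W01 n A U \<union> W11 n A U)"
  proof (cases "u \<in> U")
    case False
    with u arcs have "u \<in> {1..n} - U" by auto
    with none u v show ?thesis
      using classified_if_not_useful[of n A U u] unfolding W00_def W10_def by blast
  qed (use u in auto)
qed (use v in \<open>auto simp: W01_def W11_def\<close>)

lemma in_neighbours_split:
  assumes arcs: "A \<subseteq> {1..n} \<times> {1..n}" and none: "\<forall>x. \<not> useful_neighbour n A U x"
    and v: "v \<in> U"
  shows "{u. (u, v) \<in> A} = {u \<in> U. (u, v) \<in> A} \<union> (W10 n A U \<union> W11 n A U)"
proof (intro equalityI subsetI)
  fix u assume u: "u \<in> {u. (u, v) \<in> A}"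
  show "u \<in> {u \<in> U. (u, v) \<in> A} \<union> (W10 n A U \<union> W11 n A U)"
  proof (cases "u \<in> U")
    case False
    with u arcs have "u \<in> {1..n} - U" by auto
    with none u v show ?thesis
      using classified_if_not_useful[of n A U u] unfolding W00_def W01_def by blast
  qed (use u in auto)
qed (use v in \<open>auto simp: W10_def W11_def\<close>)

lemma three_cycle_local_degrees:
  assumes "v0 \<noteq> v1" and "v1 \<noteq> v2" and "v0 \<noteq> v2"
    and cyc: "A \<inter> ({v0, v1, v2} \<times> {v0, v1, v2}) = {(v0, v1), (v1, v2), (v2, v0)} \<or>
              A \<inter> ({v0, v1, v2} \<times> {v0, v1, v2}) = {(v1, v0), (v2, v1), (v0, v2)}"
  shows "card {u \<in> {v0, v1, v2}. (v0, u) \<in> A} = 1"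
    and "card {u \<in> {v0, v1, v2}. (u, v0) \<in> A} = 1"
proof -
  let ?U = "{v0, v1, v2}"
  have mem: "p \<in> A \<longleftrightarrow> p \<in> A \<inter> (?U \<times> ?U)" if "p \<in> ?U \<times> ?U" for p
    using that by blast
  have at_v0: "(v0, v0) \<in> ?U \<times> ?U" "(v0, v1) \<in> ?U \<times> ?U" "(v0, v2) \<in> ?U \<times> ?U"
    "(v1, v0) \<in> ?U \<times> ?U" "(v2, v0) \<in> ?U \<times> ?U" by auto
  from cyc have "({u \<in> ?U. (v0, u) \<in> A} = {v1} \<and> {u \<in> ?U. (u, v0) \<in> A} = {v2}) \<or>
      ({u \<in> ?U. (v0, u) \<in> A} = {v2} \<and> {u \<in> ?U. (u, v0) \<in> A} = {v1})"
  proof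
    assume E: "A \<inter> (?U \<times> ?U) = {(v0, v1), (v1, v2), (v2, v0)}"
    have "(v0, v0) \<notin> A" "(v0, v1) \<in> A" "(v0, v2) \<notin> A" "(v1, v0) \<notin> A" "(v2, v0) \<in> A"
      using mem[OF at_v0(1)] mem[OF at_v0(2)] mem[OF at_v0(3)] mem[OF at_v0(4)] mem[OF at_v0(5)]
      unfolding E using assms(1-3) by simp_all
    then show ?thesis using assms(1-3) by blast
  next
    assume E: "A \<inter> (?U \<times> ?U) = {(v1, v0), (v2, v1), (v0, v2)}"
    have "(v0, v0) \<notin> A" "(v0, v1) \<notin> A" "(v0, v2) \<in> A" "(v1, v0) \<in> A" "(v2, v0) \<notin> A"
      using mem[OF at_v0(1)] mem[OF at_v0(2)] mem[OF at_v0(3)] mem[OF at_v0(4)] mem[OF at_v0(5)]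
      unfolding E using assms(1-3) by simp_all
    then show ?thesis using assms(1-3) by blast
  qed
  then show "card {u \<in> ?U. (v0, u) \<in> A} = 1" "card {u \<in> ?U. (u, v0) \<in> A} = 1" by auto
qed

lemma W_finite:
  "finite (W00 n A U)" "finite (W01 n A U)" "finite (W10 n A U)" "finite (W11 n A U)"
  using W_outside by (meson finite_Diff finite_atLeastAtMost finite_subset)+

lemma degrees_split:
  assumes arcs: "A \<subseteq> {1..n} \<times> {1..n}" and none: "\<forall>x. \<not> useful_neighbour n A U x"
    and v: "v \<in> U" and fU: "finite U"
  shows "card {u. (v, u) \<in> A} = card {u \<in> U. (v, u) \<in> A} + card (W01 n A U \<union> W11 n A U)"
    and "card {u. (u, v) \<in> A} = card {u \<in> U. (u, v) \<in> A} + card (W10 n A U \<union> W11 n A U)"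
proof -
  have disj: "{u \<in> U. P u} \<inter> (X \<union> Y) = {}" if "X \<subseteq> {1..n} - U" "Y \<subseteq> {1..n} - U"
    for P :: "nat \<Rightarrow> bool" and X Y using that by blast
  show "card {u. (v, u) \<in> A} = card {u \<in> U. (v, u) \<in> A} + card (W01 n A U \<union> W11 n A U)"
    unfolding out_neighbours_split[OF arcs none v]
    by (rule card_Un_disjoint) (use fU W_finite disj[OF W_outside(2,4)] in auto)
  show "card {u. (u, v) \<in> A} = card {u \<in> U. (u, v) \<in> A} + card (W10 n A U \<union> W11 n A U)"
    unfolding in_neighbours_split[OF arcs none v]
    by (rule card_Un_disjoint) (use fU W_finite disj[OF W_outside(3,4)] in auto)
qed

(* Without useful arcs, every y \<in> W01 \<union> W11 receives arcs from all of U (by definition)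
   and from every other vertex of W10 \<union> W11 (otherwise that pair is a (U2) useful arc). *)
lemma in_neighbours_of_out_class:
  assumes none: "\<forall>x y. \<not> useful_arc n A U x y" and y: "y \<in> W01 n A U \<union> W11 n A U"
  shows "U \<union> ((W10 n A U \<union> W11 n A U) - {y}) \<subseteq> {u. (u, y) \<in> A}"
proof
  fix u assume "u \<in> U \<union> ((W10 n A U \<union> W11 n A U) - {y})"
  then show "u \<in> {u. (u, y) \<in> A}"
  proof
    assume "u \<in> U"
    with y show ?thesis unfolding W01_def W11_def by auto
  next
    assume "u \<in> (W10 n A U \<union> W11 n A U) - {y}"
    with y none[rule_format, of u y] show ?thesis unfolding useful_arc_def by auto
  qed
qed

(* Counting consequence: if d = 1 + |W10 \<union> W11| and U has three vertices, the class
   W01 \<union> W11 must be empty, since any of its members would have in-degree above d. *)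
lemma out_class_empty:
  assumes G: "A \<in> Omega n d" and UN: "U \<subseteq> {1..n}" and cU: "card U = 3"
    and none: "\<forall>x y. \<not> useful_arc n A U x y"
    and dQ: "d = 1 + card (W10 n A U \<union> W11 n A U)"
  shows "W01 n A U \<union> W11 n A U = {}"
proof (rule ccontr)
  let ?Q = "W10 n A U \<union> W11 n A U"
  assume "W01 n A U \<union> W11 n A U \<noteq> {}"
  then obtain y where y: "y \<in> W01 n A U \<union> W11 n A U" by blast
  have yN: "y \<in> {1..n}" using y W_outside by blast
  have fQ: "finite ?Q" using W_finite by blast
  have fU: "finite U" using UN finite_subset by blast
  have "{u. (u, y) \<in> A} \<subseteq> {1..n}" using Omega_D(1)[OF G] by auto
  then have fin_in: "finite {u. (u, y) \<in> A}" using finite_subset by blast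
  have disj: "U \<inter> (?Q - {y}) = {}" using W_outside by blast
  have "card U + (card ?Q - 1) \<le> card (U \<union> (?Q - {y}))"
    using card_Un_disjoint[OF fU _ disj] fQ card_Diff_singleton_if[of ?Q y] by auto
  also have "\<dots> \<le> card {u. (u, y) \<in> A}"
    by (rule card_mono[OF fin_in in_neighbours_of_out_class[OF none y]])
  also have "\<dots> = d" using Omega_D(4)[OF G yN] .
  finally show False using cU dQ by linarith
qed

(* If all outside vertices lie in W00, any arc leaving a W00 vertex stays in W00 and is
   therefore a useful arc of type (U1). *)
lemma W00_arc_is_useful:
  assumes G: "A \<in> Omega n d" and none: "\<forall>x. \<not> useful_neighbour n A U x"
    and P: "W01 n A U \<union> W11 n A U = {}" and Q: "W10 n A U \<union> W11 n A U = {}"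
    and x: "x \<in> W00 n A U" and xz: "(x, z) \<in> A"
  shows "useful_arc n A U x z"
proof -
  have "z \<in> {1..n} - U" using x xz Omega_D(1)[OF G] unfolding W00_def by auto
  then have "z \<in> W00 n A U"
    using classified_if_not_useful[of n A U z] none P Q by blast
  moreover have "x \<noteq> z" using xz Omega_D(2)[OF G] by auto
  ultimately show ?thesis using x xz unfolding useful_arc_def by auto
qed

theorem mainTheorem6:
  fixes n d :: nat and A :: "(nat \<times> nat) set" and v0 v1 v2 :: nat
  assumes "n \<ge> 4" and "1 \<le> d" and "d \<le> n - 1"
    and "A \<in> Omega n d"
    and "{v0, v1, v2} \<subseteq> {1..n}"
    and "v0 \<noteq> v1" and "v1 \<noteq> v2" and "v0 \<noteq> v2"
    and "A \<inter> ({v0, v1, v2} \<times> {v0, v1, v2}) = {(v0, v1), (v1, v2), (v2, v0)} \<or>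
         A \<inter> ({v0, v1, v2} \<times> {v0, v1, v2}) = {(v1, v0), (v2, v1), (v0, v2)}"
  shows "(\<exists>x. useful_neighbour n A {v0, v1, v2} x) \<or>
         (\<exists>x y. useful_arc n A {v0, v1, v2} x y)"
proof (rule ccontr)
  let ?U = "{v0, v1, v2}"
  let ?P = "W01 n A ?U \<union> W11 n A ?U" and ?Q = "W10 n A ?U \<union> W11 n A ?U"
  assume "\<not> ?thesis"
  then have no_nb: "\<forall>x. \<not> useful_neighbour n A ?U x"
    and no_arc: "\<forall>x y. \<not> useful_arc n A ?U x y" by auto
  note G = assms(4) and local = three_cycle_local_degrees[OF assms(6-9)]
  have v0N: "v0 \<in> {1..n}" using assms(5) by auto
  have cU: "card ?U = 3" using assms(6-8) by auto
  note split = degrees_split[OF Omega_D(1)[OF G] no_nb, of v0]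
  have "d = 1 + card ?P" using split(1) Omega_D(3)[OF G v0N] local(1) by simp
  moreover have dQ: "d = 1 + card ?Q" using split(2) Omega_D(4)[OF G v0N] local(2) by simp
  moreover have P: "?P = {}" using out_class_empty[OF G assms(5) cU no_arc dQ] .
  ultimately have d1: "d = 1" and Q: "?Q = {}" using W_finite by auto
  have "card ({1..n} - ?U) > 0" using card_Diff_subset[OF _ assms(5)] cU assms(1) by simp
  then obtain x where x: "x \<in> {1..n} - ?U" by (metis card.empty ex_in_conv less_irrefl)
  then have xW: "x \<in> W00 n A ?U" using classified_if_not_useful[of n A ?U x] no_nb P Q by blast
  have "card {u. (x, u) \<in> A} = 1" using Omega_D(3)[OF G] x d1 by auto
  then obtain z where "(x, z) \<in> A" by (metis card.empty empty_Collect_eq zero_neq_one)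
  then show False using W00_arc_is_useful[OF G no_nb P Q xW] no_arc by blast
qed

end
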